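(* Let $h:\mathbb{R}^n_+\to\mathbb{R}^n$ be continuous. Assume that $h_i(x)\geq 0$ for every $i\in\{1,\dots,n\}$ and every $x\in\mathbb{R}^n_+$ with $x_i=0$, and that there exists no $x\in\mathbb{R}^n_+$ with $x\neq 0$ and $h(x)\geq 0$. Then there exists some $v\in\Delta_n$ with $h(v)\ll 0$.
   Context: $\mathbb{R}^n_+=\{x\in\mathbb{R}^n: x_i\geq 0,\ 1\leq i\leq n\}$. For $x,y\in\mathbb{R}^n$: $x\geq y$ means $x_i\geq y_i$ for all $i$; $x\gg y$ means $x_i>y_i$ for all $i$. Thus $h(x)\geq 0$ means all components of $h(x)$ are nonnegative, and $h(v)\ll 0$ means all components of $h(v)$ are strictly negative. $\Delta_n$ denotes the standard simplex in $\mathbb{R}^n$, i.e. the convex hull of the standard basis vectors $e_1,\dots,e_n$. *)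

theory Defs
  imports "HOL-Analysis.Analysis"
begin

definition nonneg_orthant :: "(real ^ 'n) set" where
  "nonneg_orthant = {x. \<forall>i. x $ i \<ge> 0}"

definition std_simplex :: "(real ^ 'n) set" where
  "std_simplex = convex hull (range (\<lambda>i. axis i 1))"

end

theory Submission
  imports Defs
begin

text \<open>Push x along the positive part p of h(x)+\<epsilon> and renormalise onto the simplex. By Brouwer this
  map has a fixed point x, at which p is a nonnegative multiple of x. If that multiple is 0 then
  h(x) \<le> -\<epsilon> componentwise; otherwise h(x)_i + \<epsilon> \<ge> 0 wherever x_i > 0, and also wherever
  x_i = 0 by the boundary condition, so h(x) + (\<epsilon>,\<dots>,\<epsilon>) lies in the orthant. Since h maps the
  compact simplex to a compact set disjoint from the orthant, the second case is impossible
  once \<epsilon> is small enough.\<close>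

lemma std_simplex_eq:
  "(std_simplex :: (real ^ 'n) set) = {x. (\<forall>i. 0 \<le> x $ i) \<and> (\<Sum>i\<in>UNIV. x $ i) = 1}"
  (is "_ = ?T")
proof
  have "convex ?T"
    by (rule convexI) (simp add: sum.distrib sum_distrib_left[symmetric])
  moreover have "range (\<lambda>i. axis i (1::real)) \<subseteq> ?T"
    by (auto simp: axis_def)
  ultimately show "std_simplex \<subseteq> ?T"
    unfolding std_simplex_def by (rule hull_minimal[rotated])
next
  show "?T \<subseteq> std_simplex"
  proof
    fix x :: "real ^ 'n"
    assume x: "x \<in> ?T"
    have "(\<Sum>i\<in>UNIV. x $ i *\<^sub>R axis i (1::real)) \<in> std_simplex"
      unfolding std_simplex_def
      by (rule convex_sum) (use x in \<open>auto intro: hull_inc\<close>)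
    then show "x \<in> std_simplex"
      using basis_expansion[of x] by (simp add: scalar_mult_eq_scaleR)
  qed
qed

lemma compact_std_simplex: "compact std_simplex"
  unfolding std_simplex_def by (rule compact_convex_hull) (simp add: finite_imp_compact)

lemma convex_std_simplex: "convex std_simplex"
  unfolding std_simplex_def by simp

lemma std_simplex_nonempty: "std_simplex \<noteq> {}"
  unfolding std_simplex_def by simp

lemma std_simplex_subset_nonneg_orthant: "std_simplex \<subseteq> nonneg_orthant"
  unfolding std_simplex_eq nonneg_orthant_def by auto

lemma zero_notin_std_simplex: "0 \<notin> std_simplex"
  unfolding std_simplex_eq by simp

lemma closed_nonneg_orthant: "closed (nonneg_orthant :: (real ^ 'n) set)"
  unfolding nonneg_orthant_def
  by (intro closed_Collect_all closed_halfspace_component_ge_cart)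

lemma normalised_shift_in_std_simplex:
  assumes "x \<in> std_simplex" and "\<And>i. 0 \<le> p $ i"
  shows "(1 / (1 + (\<Sum>i\<in>UNIV. p $ i))) *\<^sub>R (x + p) \<in> std_simplex"
proof -
  define s where "s = (\<Sum>i\<in>UNIV. p $ i)"
  have "0 \<le> s"
    unfolding s_def using assms(2) by (simp add: sum_nonneg)
  moreover have "(\<Sum>i\<in>UNIV. ((1 / (1 + s)) *\<^sub>R (x + p)) $ i) = (\<Sum>i\<in>UNIV. x $ i + p $ i) / (1 + s)"
    by (simp add: sum_divide_distrib)
  ultimately show ?thesis
    using assms unfolding std_simplex_eq s_def[symmetric] by (simp add: sum.distrib s_def)
qed

lemma compact_avoiding_nonneg_orthant:
  fixes K :: "(real ^ 'n) set"
  assumes "compact K" and "K \<inter> nonneg_orthant = {}"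
  obtains \<epsilon> :: real where "\<epsilon> > 0" and "\<And>y. y \<in> K \<Longrightarrow> \<exists>i. y $ i < - \<epsilon>"
proof -
  obtain d where "d > 0" and d: "\<And>y z. y \<in> K \<Longrightarrow> z \<in> nonneg_orthant \<Longrightarrow> d \<le> dist y z"
    using separate_compact_closed[OF assms(1) closed_nonneg_orthant assms(2)] by blast
  define \<epsilon> where "\<epsilon> = d / (2 * norm (1 :: real ^ 'n))"
  have "\<epsilon> > 0" and "\<epsilon> * norm (1 :: real ^ 'n) < d"
    unfolding \<epsilon>_def using \<open>d > 0\<close> by (simp_all add: field_simps)
  moreover have "\<exists>i. y $ i < - \<epsilon>" if "y \<in> K" for y :: "real ^ 'n"
  proof (rule ccontr)
    assume "\<not> (\<exists>i. y $ i < - \<epsilon>)"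
    then have "0 \<le> y $ i + \<epsilon>" for i
      by (auto simp: not_less dest: spec[of _ i])
    then have "y + \<epsilon> *\<^sub>R 1 \<in> nonneg_orthant"
      unfolding nonneg_orthant_def by simp
    then have "d \<le> dist y (y + \<epsilon> *\<^sub>R 1)"
      using d[OF that] by blast
    also have "\<dots> = \<epsilon> * norm (1 :: real ^ 'n)"
      using \<open>\<epsilon> > 0\<close> by (simp add: dist_norm)
    finally show False
      using \<open>\<epsilon> * norm 1 < d\<close> by simp
  qed
  ultimately show ?thesis using that by blast
qed

lemma std_simplex_fixed_point_alternative:
  fixes g :: "real ^ 'n \<Rightarrow> real ^ 'n"
  assumes cont: "continuous_on std_simplex g"
    and boundary: "\<And>x i. x \<in> std_simplex \<Longrightarrow> x $ i = 0 \<Longrightarrow> 0 \<le> g x $ i"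
    and "\<epsilon> > 0"
  shows "\<exists>x\<in>std_simplex. (\<forall>i. g x $ i < 0) \<or> (\<forall>i. - \<epsilon> \<le> g x $ i)"
proof -
  define p where "p x = (\<chi> i. max 0 (g x $ i + \<epsilon>))" for x
  define s where "s x = (\<Sum>i\<in>UNIV. p x $ i)" for x
  define f where "f x = (1 / (1 + s x)) *\<^sub>R (x + p x)" for x
  have p_nonneg: "0 \<le> p x $ i" for x i
    unfolding p_def by simp
  then have s_nonneg: "0 \<le> s x" for x
    unfolding s_def by (simp add: sum_nonneg)
  have "continuous_on std_simplex p"
    unfolding p_def by (intro continuous_on_vec_lambda continuous_intros continuous_on_component cont)
  moreover have "continuous_on std_simplex s"
    unfolding s_def by (intro continuous_intros continuous_on_component \<open>continuous_on std_simplex p\<close>)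
  moreover have "1 + s x \<noteq> 0" for x
    using s_nonneg[of x] by linarith
  ultimately have "continuous_on std_simplex f"
    unfolding f_def by (intro continuous_intros) auto
  moreover have "f \<in> std_simplex \<rightarrow> std_simplex"
    unfolding f_def s_def using normalised_shift_in_std_simplex p_nonneg by blast
  ultimately obtain x where x: "x \<in> std_simplex" "f x = x"
    using brouwer[OF compact_std_simplex convex_std_simplex std_simplex_nonempty] by blast
  have "(1 + s x) *\<^sub>R x = (1 + s x) *\<^sub>R f x"
    using x(2) by simp
  also have "\<dots> = x + p x"
    unfolding f_def using s_nonneg[of x] by simp
  finally have "((1 + s x) *\<^sub>R x) $ i = (x + p x) $ i" for i
    by simp
  then have p_fixed: "p x $ i = s x * x $ i" for i
    by (simp add: algebra_simps)
  show ?thesis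
  proof (cases "s x = 0")
    case True
    then have "g x $ i < 0" for i
      using p_fixed[of i] \<open>\<epsilon> > 0\<close> unfolding p_def by (simp add: max_def split: if_splits)
    with x(1) show ?thesis by blast
  next
    case False
    have "- \<epsilon> \<le> g x $ i" for i
    proof (cases "x $ i = 0")
      case True
      then show ?thesis using boundary[OF x(1)] \<open>\<epsilon> > 0\<close> by force
    next
      case False
      then have "0 < x $ i"
        using x(1) unfolding std_simplex_eq by (simp add: order_less_le)
      then have "0 < p x $ i"
        using p_fixed \<open>s x \<noteq> 0\<close> s_nonneg[of x] by (simp add: order_less_le)
      then show ?thesis unfolding p_def by (simp add: max_def split: if_splits)
    qed
    with x(1) show ?thesis by blast
  qed
qed

theorem lemma1:
  fixes h :: "real ^ 'n \<Rightarrow> real ^ 'n"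
  assumes cont: "continuous_on nonneg_orthant h"
    and boundary: "\<And>x i. x \<in> nonneg_orthant \<Longrightarrow> x $ i = 0 \<Longrightarrow> h x $ i \<ge> 0"
    and no_nonneg: "\<not> (\<exists>x \<in> nonneg_orthant. x \<noteq> 0 \<and> (\<forall>i. h x $ i \<ge> 0))"
  shows "\<exists>v \<in> std_simplex. \<forall>i. h v $ i < 0"
proof -
  have cont_simplex: "continuous_on std_simplex h"
    using cont std_simplex_subset_nonneg_orthant by (rule continuous_on_subset)
  have "h ` std_simplex \<inter> nonneg_orthant = {}"
  proof (intro equals0I)
    fix y assume "y \<in> h ` std_simplex \<inter> nonneg_orthant"
    then obtain x where x: "x \<in> std_simplex" and "\<forall>i. 0 \<le> h x $ i"
      unfolding nonneg_orthant_def by auto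
    moreover have "x \<in> nonneg_orthant" "x \<noteq> 0"
      using x std_simplex_subset_nonneg_orthant zero_notin_std_simplex by auto
    ultimately show False
      using no_nonneg by blast
  qed
  then obtain \<epsilon> :: real where "\<epsilon> > 0" and far: "\<And>y. y \<in> h ` std_simplex \<Longrightarrow> \<exists>i. y $ i < - \<epsilon>"
    using compact_avoiding_nonneg_orthant[OF compact_continuous_image[OF cont_simplex compact_std_simplex]]
    by blast
  have "\<And>x i. x \<in> std_simplex \<Longrightarrow> x $ i = 0 \<Longrightarrow> 0 \<le> h x $ i"
    using boundary std_simplex_subset_nonneg_orthant by blast
  then obtain x where "x \<in> std_simplex" and "(\<forall>i. h x $ i < 0) \<or> (\<forall>i. - \<epsilon> \<le> h x $ i)"
    using std_simplex_fixed_point_alternative[OF cont_simplex _ \<open>\<epsilon> > 0\<close>] by blast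
  moreover have "\<exists>i. h x $ i < - \<epsilon>"
    using far \<open>x \<in> std_simplex\<close> by blast
  ultimately show ?thesis
    by (meson not_less)
qed

end
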